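(* Let $M\le N$, $K=N-M$. Let $A$ be a commutative unital $C^*$-algebra and $P\in M_M(A)$ a submagic matrix whose entries generate $A$, and write $A=C(S)$ with $S\subset\widetilde S_M$ so that $P_{ij}$ is the function $\sigma\mapsto1$ if $\sigma(j)=i$ and $0$ otherwise. The following are equivalent: (1) $P$ can be completed to a magic matrix $\widetilde P\in M_N(A)$ (one whose upper-left $M\times M$ block is $P$); (2) each $\sigma\in S$ has at most $K$ undefined values (i.e. if $\sigma:X\to Y$ then $M-|X|\le K$); (3) $\sum_{i,j}P_{ij}\ge (M-K)1$.
   Context: $\widetilde S_M$ is the set of partial permutations of $\{1,\ldots,M\}$, i.e. bijections $\sigma:X\to Y$ with $X,Y\subset\{1,\ldots,M\}$; $\sigma(j)$ is undefined for $j\notin X$. A submagic matrix over $A$ is a square matrix of orthogonal projections, pairwise orthogonal within each row and each column; it is magic if moreover each row and each column sums to $1$. Every commutative unital $C^*$-algebra generated by the entries of an $M\times M$ submagic matrix is of the form $C(S)$ as described, for some $S\subset\widetilde S_M$. *)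

theory Defs
  imports Complex_Main "HOL-Library.Complex_Order"
begin

definition partial_perms :: "nat \<Rightarrow> (nat \<Rightarrow> nat option) set" where
  "partial_perms M = {\<sigma>. dom \<sigma> \<subseteq> {1..M} \<and> ran \<sigma> \<subseteq> {1..M} \<and> inj_on \<sigma> (dom \<sigma>)}"

text \<open>The commutative C*-algebra C(S) is modelled as complex-valued functions on S
  (S is finite); equalities and orderings are pointwise on S.
  Matrices are indexed by {1..n}.\<close>

definition is_proj_on :: "'a set \<Rightarrow> ('a \<Rightarrow> complex) \<Rightarrow> bool" where
  "is_proj_on S f \<longleftrightarrow> (\<forall>x\<in>S. cnj (f x) = f x \<and> f x * f x = f x)"

definition submagic_on :: "'a set \<Rightarrow> nat \<Rightarrow> (nat \<Rightarrow> nat \<Rightarrow> 'a \<Rightarrow> complex) \<Rightarrow> bool" where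
  "submagic_on S n Q \<longleftrightarrow>
     (\<forall>i\<in>{1..n}. \<forall>j\<in>{1..n}. is_proj_on S (Q i j)) \<and>
     (\<forall>i\<in>{1..n}. \<forall>j\<in>{1..n}. \<forall>k\<in>{1..n}. j \<noteq> k \<longrightarrow>
        (\<forall>x\<in>S. Q i j x * Q i k x = 0 \<and> Q j i x * Q k i x = 0))"

definition magic_on :: "'a set \<Rightarrow> nat \<Rightarrow> (nat \<Rightarrow> nat \<Rightarrow> 'a \<Rightarrow> complex) \<Rightarrow> bool" where
  "magic_on S n Q \<longleftrightarrow> submagic_on S n Q \<and>
     (\<forall>i\<in>{1..n}. \<forall>x\<in>S. (\<Sum>j=1..n. Q i j x) = 1) \<and>
     (\<forall>j\<in>{1..n}. \<forall>x\<in>S. (\<Sum>i=1..n. Q i j x) = 1)"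

end

theory Submission
  imports Defs
begin

text \<open>At a point \<sigma> of S the matrix P is the 0/1 matrix of the partial permutation \<sigma>,
  whose entries add up to the size of dom \<sigma>. A magic completion, evaluated at \<sigma>, is a matrix
  with nonnegative entries and all row and column sums 1; summing its first M columns and
  bounding the lower-left block by the last N - M rows shows that the upper-left block sums to
  at least M - K, which gives (1) \<Longrightarrow> (2). Conversely, if \<sigma> has at most K holes, the holes can
  be sent injectively into {M+1..N}, and the resulting injection of {1..M} extends to a
  permutation of {1..N}; these permutation matrices, chosen pointwise on S, form the
  completion. Finally (2) \<longleftrightarrow> (3) is just the count of the entries of P.\<close>

lemma inj_on_extends_to_bij_betw:
  assumes "finite B" "A \<subseteq> B" "g ` A \<subseteq> B" "inj_on g A"
  shows "\<exists>f. bij_betw f B B \<and> (\<forall>x\<in>A. f x = g x)"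
proof -
  have "card (B - A) = card (B - g ` A)"
    using assms by (simp add: card_Diff_subset card_image finite_subset)
  then obtain h where h: "bij_betw h (B - A) (B - g ` A)"
    using assms(1) finite_same_card_bij by blast
  define f where "f x = (if x \<in> A then g x else h x)" for x
  have "bij_betw f A (g ` A)"
    using assms(4) by (simp add: bij_betw_def f_def inj_on_def)
  moreover have "bij_betw f (B - A) (B - g ` A)"
    using h by (rule bij_betw_cong[THEN iffD1, rotated]) (simp add: f_def)
  ultimately have "bij_betw f (A \<union> (B - A)) (g ` A \<union> (B - g ` A))"
    by (rule bij_betw_combine) blast
  then have "bij_betw f B B"
    using assms(2,3) by (simp add: Un_absorb1 Un_Diff_cancel)
  then show ?thesis
    by (auto simp: f_def)
qed

lemma partial_perm_extends_to_perm:
  assumes \<sigma>: "\<sigma> \<in> partial_perms M" and "M \<le> N" and holes: "M - card (dom \<sigma>) \<le> N - M"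
  shows "\<exists>f. bij_betw f {1..N} {1..N} \<and> (\<forall>j\<in>dom \<sigma>. \<sigma> j = Some (f j))
              \<and> (\<forall>j\<in>{1..M} - dom \<sigma>. M < f j)"
proof -
  have dom: "dom \<sigma> \<subseteq> {1..M}" and ran: "ran \<sigma> \<subseteq> {1..M}" and inj: "inj_on \<sigma> (dom \<sigma>)"
    using \<sigma> by (auto simp: partial_perms_def)
  have holes_card: "card ({1..M} - dom \<sigma>) \<le> card {M+1..N}"
    using dom holes by (simp add: card_Diff_subset finite_subset[OF dom])
  obtain e where e: "e ` ({1..M} - dom \<sigma>) \<subseteq> {M+1..N}" "inj_on e ({1..M} - dom \<sigma>)"
    using card_le_inj[OF _ _ holes_card] by blast
  define g where "g j = (if j \<in> dom \<sigma> then the (\<sigma> j) else e j)" for j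
  have g_dom: "\<sigma> j = Some (g j)" if "j \<in> dom \<sigma>" for j
    using that by (auto simp: g_def)
  have g_holes: "g j \<in> {M+1..N}" if "j \<in> {1..M} - dom \<sigma>" for j
    using that e(1) by (auto simp: g_def simp del: atLeastAtMost_iff)
  have g_dom_range: "g j \<in> {1..M}" if "j \<in> dom \<sigma>" for j
    using ran g_dom[OF that] by (meson ranI subsetD)
  have "g ` {1..M} \<subseteq> {1..N}"
  proof
    fix i assume "i \<in> g ` {1..M}"
    then obtain j where "j \<in> {1..M}" "i = g j" by blast
    then show "i \<in> {1..N}"
      using g_dom_range[of j] g_holes[of j] \<open>M \<le> N\<close> by (cases "j \<in> dom \<sigma>") auto
  qed
  moreover have "inj_on g {1..M}"
  proof -
    have "inj_on g (dom \<sigma>)"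
      using inj g_dom unfolding inj_on_def by (metis option.inject)
    moreover have "inj_on g ({1..M} - dom \<sigma>)"
      using e(2) by (simp add: g_def inj_on_def)
    moreover have "g ` dom \<sigma> \<inter> g ` ({1..M} - dom \<sigma>) = {}"
      using g_dom_range g_holes by fastforce
    ultimately have "inj_on g (dom \<sigma> \<union> ({1..M} - dom \<sigma>))"
      unfolding inj_on_Un by blast
    then show ?thesis
      using dom by (simp add: Un_absorb1 Un_Diff_cancel)
  qed
  ultimately obtain f where f: "bij_betw f {1..N} {1..N}" "\<forall>j\<in>{1..M}. f j = g j"
    using inj_on_extends_to_bij_betw[of "{1..N}" "{1..M}" g] \<open>M \<le> N\<close> by auto
  moreover have "\<forall>j\<in>dom \<sigma>. \<sigma> j = Some (f j)"
    using dom f(2) g_dom by auto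
  moreover have "\<forall>j\<in>{1..M} - dom \<sigma>. M < f j"
    using f(2) g_holes by fastforce
  ultimately show ?thesis
    by blast
qed

lemma sum_partial_perm_matrix:
  assumes "\<sigma> \<in> partial_perms M"
  shows "(\<Sum>i=1..M. \<Sum>j=1..M. if \<sigma> j = Some i then 1 else 0) = (of_nat (card (dom \<sigma>)) :: 'a::comm_semiring_1)"
proof -
  have dom: "dom \<sigma> \<subseteq> {1..M}" and ran: "ran \<sigma> \<subseteq> {1..M}"
    using assms by (auto simp: partial_perms_def)
  have column: "(\<Sum>i=1..M. if \<sigma> j = Some i then 1 else 0) = (if j \<in> dom \<sigma> then 1 else (0::'a))" for j
  proof (cases "\<sigma> j")
    case (Some i)
    then have "i \<in> {1..M}"
      using ran by (meson ranI subsetD)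
    with Some show ?thesis
      by (simp add: domIff eq_commute[of i])
  qed auto
  have "(\<Sum>i=1..M. \<Sum>j=1..M. if \<sigma> j = Some i then 1 else 0)
      = (\<Sum>j=1..M. if j \<in> dom \<sigma> then 1 else (0::'a))"
    by (subst sum.swap) (rule sum.cong[OF refl column])
  also have "\<dots> = of_nat (card ({1..M} \<inter> dom \<sigma>))"
    by (simp add: sum.If_cases)
  finally show ?thesis
    using dom by (simp add: Int_absorb1)
qed

lemma is_proj_on_nonneg:
  assumes "is_proj_on S f" "x \<in> S"
  shows "0 \<le> f x"
proof -
  have "f x * (f x - 1) = 0"
    using assms by (simp add: is_proj_on_def algebra_simps)
  then have "f x = 0 \<or> f x = 1"
    by simp
  then show ?thesis
    by (auto simp: less_eq_complex_def)
qed

lemma doubly_stochastic_block_sum_ge: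
  fixes q :: "nat \<Rightarrow> nat \<Rightarrow> 'a::{ordered_comm_monoid_add, semiring_1}"
  assumes "M \<le> N"
    and nonneg: "\<And>i j. i \<in> {1..N} \<Longrightarrow> j \<in> {1..N} \<Longrightarrow> 0 \<le> q i j"
    and rows: "\<And>i. i \<in> {1..N} \<Longrightarrow> (\<Sum>j=1..N. q i j) = 1"
    and cols: "\<And>j. j \<in> {1..N} \<Longrightarrow> (\<Sum>i=1..N. q i j) = 1"
  shows "of_nat M \<le> (\<Sum>i=1..M. \<Sum>j=1..M. q i j) + of_nat (N - M)"
proof -
  have split: "(\<Sum>i=1..N. f i) = (\<Sum>i=1..M. f i) + (\<Sum>i=M+1..N. f i)" for f :: "nat \<Rightarrow> 'a"
    using \<open>M \<le> N\<close> by (subst sum.union_disjoint[symmetric]) (auto intro: sum.cong)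
  have "of_nat M = (\<Sum>j=1..M. \<Sum>i=1..N. q i j)"
    using cols \<open>M \<le> N\<close> by simp
  also have "\<dots> = (\<Sum>j=1..M. \<Sum>i=1..M. q i j) + (\<Sum>j=1..M. \<Sum>i=M+1..N. q i j)"
    by (simp only: split sum.distrib)
  also have "\<dots> = (\<Sum>i=1..M. \<Sum>j=1..M. q i j) + (\<Sum>i=M+1..N. \<Sum>j=1..M. q i j)"
    by (metis sum.swap)
  also have "(\<Sum>i=M+1..N. \<Sum>j=1..M. q i j) \<le> (\<Sum>i=M+1..N. \<Sum>j=1..N. q i j)"
    using \<open>M \<le> N\<close> nonneg by (intro sum_mono sum_mono2) auto
  also have "\<dots> = of_nat (N - M)"
    using rows by simp
  finally show ?thesis
    by (simp add: add_left_mono)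
qed

lemma magic_on_perm_matrix:
  assumes perm: "\<And>x. x \<in> S \<Longrightarrow> bij_betw (F x) {1..N} {1..N}"
  shows "magic_on S N (\<lambda>i j x. if F x j = i then 1 else 0)"
proof -
  have "F x j \<noteq> F x k" if "x \<in> S" "j \<in> {1..N}" "k \<in> {1..N}" "j \<noteq> k" for x j k
    using perm[OF that(1)] that(2-4) unfolding bij_betw_def by (meson inj_onD)
  then have "submagic_on S N (\<lambda>i j x. if F x j = i then 1 else 0)"
    unfolding submagic_on_def is_proj_on_def by auto
  moreover have "(\<Sum>j=1..N. if F x j = i then 1 else 0) = (1::complex)"
    if "i \<in> {1..N}" "x \<in> S" for i x
  proof -
    have "(\<Sum>j=1..N. if F x j = i then 1 else 0) = (\<Sum>k=1..N. if k = i then 1 else (0::complex))"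
      using sum.reindex_bij_betw[OF perm[OF \<open>x \<in> S\<close>], of "\<lambda>k. if k = i then 1 else 0"] .
    also have "\<dots> = 1"
      using that by simp
    finally show ?thesis .
  qed
  moreover have "(\<Sum>i=1..N. if F x j = i then 1 else 0) = (1::complex)"
    if "j \<in> {1..N}" "x \<in> S" for j x
  proof -
    have "F x j \<in> {1..N}"
      using bij_betwE[OF perm[OF that(2)]] that(1) by blast
    then show ?thesis
      by (simp add: eq_commute[of "F x j"])
  qed
  ultimately show ?thesis
    unfolding magic_on_def by blast
qed

lemma holes_le_if_magic_completion:
  assumes "M \<le> N" "\<sigma> \<in> S" "\<sigma> \<in> partial_perms M" "magic_on S N Q"
    and block: "\<forall>i\<in>{1..M}. \<forall>j\<in>{1..M}. Q i j \<sigma> = (if \<sigma> j = Some i then 1 else 0)"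
  shows "M - card (dom \<sigma>) \<le> N - M"
proof -
  have nonneg: "0 \<le> Q i j \<sigma>" if "i \<in> {1..N}" "j \<in> {1..N}" for i j
    using assms(4) that is_proj_on_nonneg[OF _ assms(2)] unfolding magic_on_def submagic_on_def by blast
  have rows: "(\<Sum>j=1..N. Q i j \<sigma>) = 1" if "i \<in> {1..N}" for i
    using assms(2,4) that unfolding magic_on_def by blast
  have cols: "(\<Sum>i=1..N. Q i j \<sigma>) = 1" if "j \<in> {1..N}" for j
    using assms(2,4) that unfolding magic_on_def by blast
  have "of_nat M \<le> (\<Sum>i=1..M. \<Sum>j=1..M. Q i j \<sigma>) + of_nat (N - M)"
    by (rule doubly_stochastic_block_sum_ge[OF assms(1) nonneg rows cols])
  also have "(\<Sum>i=1..M. \<Sum>j=1..M. Q i j \<sigma>) = of_nat (card (dom \<sigma>))"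
    using block sum_partial_perm_matrix[OF assms(3)] by simp
  finally have "(of_nat M :: complex) \<le> of_nat (card (dom \<sigma>) + (N - M))"
    by simp
  then show ?thesis
    by (simp add: less_eq_complex_def)
qed

lemma magic_completion_if_holes_le:
  assumes "M \<le> N" "S \<subseteq> partial_perms M" "\<forall>\<sigma>\<in>S. M - card (dom \<sigma>) \<le> N - M"
  shows "\<exists>Q. magic_on S N Q
           \<and> (\<forall>i\<in>{1..M}. \<forall>j\<in>{1..M}. \<forall>\<sigma>\<in>S. Q i j \<sigma> = (if \<sigma> j = Some i then 1 else 0))"
proof -
  have "\<forall>\<sigma>\<in>S. \<exists>f. bij_betw f {1..N} {1..N}
      \<and> (\<forall>j\<in>dom \<sigma>. \<sigma> j = Some (f j)) \<and> (\<forall>j\<in>{1..M} - dom \<sigma>. M < f j)"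
    using partial_perm_extends_to_perm[OF _ assms(1)] assms(2,3) by blast
  then obtain F where F: "\<forall>\<sigma>\<in>S. bij_betw (F \<sigma>) {1..N} {1..N}
      \<and> (\<forall>j\<in>dom \<sigma>. \<sigma> j = Some (F \<sigma> j)) \<and> (\<forall>j\<in>{1..M} - dom \<sigma>. M < F \<sigma> j)"
    by (rule bchoice[THEN exE])
  define Q where "Q i j \<sigma> = (if F \<sigma> j = i then 1 else (0::complex))" for i j \<sigma>
  have "magic_on S N Q"
    unfolding Q_def using F by (intro magic_on_perm_matrix) blast
  moreover have "Q i j \<sigma> = (if \<sigma> j = Some i then 1 else 0)"
    if "i \<in> {1..M}" "j \<in> {1..M}" "\<sigma> \<in> S" for i j \<sigma>
  proof (cases "j \<in> dom \<sigma>")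
    case True
    then have "\<sigma> j = Some (F \<sigma> j)"
      using F that(3) by blast
    then show ?thesis
      by (auto simp: Q_def)
  next
    case False
    then have "M < F \<sigma> j" "\<sigma> j = None"
      using F that(2,3) by auto
    then show ?thesis
      using that(1) by (auto simp: Q_def)
  qed
  ultimately show ?thesis
    by blast
qed

theorem proposition3p4:
  fixes M N K :: nat
    and S :: "(nat \<Rightarrow> nat option) set"
    and P :: "nat \<Rightarrow> nat \<Rightarrow> (nat \<Rightarrow> nat option) \<Rightarrow> complex"
  assumes "M \<le> N" and "K = N - M"
    and "S \<subseteq> partial_perms M"
    and "\<And>i j \<sigma>. P i j \<sigma> = (if \<sigma> j = Some i then 1 else 0)"
  shows "((\<exists>Q. magic_on S N Q \<and> (\<forall>i\<in>{1..M}. \<forall>j\<in>{1..M}. \<forall>\<sigma>\<in>S. Q i j \<sigma> = P i j \<sigma>))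
            \<longleftrightarrow> (\<forall>\<sigma>\<in>S. M - card (dom \<sigma>) \<le> K))
       \<and> ((\<forall>\<sigma>\<in>S. M - card (dom \<sigma>) \<le> K)
            \<longleftrightarrow> (\<forall>\<sigma>\<in>S. of_int (int M - int K) \<le> (\<Sum>i=1..M. \<Sum>j=1..M. P i j \<sigma>)))"
proof -
  have P: "P = (\<lambda>i j \<sigma>. if \<sigma> j = Some i then 1 else 0)"
    using assms(4) by blast
  have "(\<exists>Q. magic_on S N Q \<and> (\<forall>i\<in>{1..M}. \<forall>j\<in>{1..M}. \<forall>\<sigma>\<in>S. Q i j \<sigma> = P i j \<sigma>))
      \<longleftrightarrow> (\<forall>\<sigma>\<in>S. M - card (dom \<sigma>) \<le> K)"
  proof
    assume "\<exists>Q. magic_on S N Q \<and> (\<forall>i\<in>{1..M}. \<forall>j\<in>{1..M}. \<forall>\<sigma>\<in>S. Q i j \<sigma> = P i j \<sigma>)"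
    then show "\<forall>\<sigma>\<in>S. M - card (dom \<sigma>) \<le> K"
      using holes_le_if_magic_completion[OF assms(1) _ subsetD[OF assms(3)]] assms(2) unfolding P by metis
  next
    assume "\<forall>\<sigma>\<in>S. M - card (dom \<sigma>) \<le> K"
    then show "\<exists>Q. magic_on S N Q \<and> (\<forall>i\<in>{1..M}. \<forall>j\<in>{1..M}. \<forall>\<sigma>\<in>S. Q i j \<sigma> = P i j \<sigma>)"
      using magic_completion_if_holes_le[OF assms(1,3)] assms(2) unfolding P by simp
  qed
  moreover have "M - card (dom \<sigma>) \<le> K \<longleftrightarrow> of_int (int M - int K) \<le> (\<Sum>i=1..M. \<Sum>j=1..M. P i j \<sigma>)"
    if "\<sigma> \<in> S" for \<sigma>
  proof -
    have "card (dom \<sigma>) \<le> M"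
      using assms(3) that card_mono[of "{1..M}" "dom \<sigma>"] by (auto simp: partial_perms_def)
    moreover have "(\<Sum>i=1..M. \<Sum>j=1..M. P i j \<sigma>) = of_nat (card (dom \<sigma>))"
      using sum_partial_perm_matrix[of \<sigma> M] assms(3) that unfolding P by blast
    ultimately show ?thesis
      by (simp add: less_eq_complex_def) linarith
  qed
  ultimately show ?thesis
    by blast
qed

end
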